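(* Let $n\ge2$ and let $(V,\langle-,\ldots,-\rangle_n)$ be an alternating (resp. symmetric) $n$-linear space over a field $K$ with $V$ infinite-dimensional. Then $\langle-,\ldots,-\rangle_n$ is non-degenerate if and only if it is generic.
   Context: Let $\lozenge^{n-1}V$ be the exterior power $\bigwedge^{n-1}V$ in the alternating case and the symmetric power $\bigvee^{n-1}V$ in the symmetric case, and let $\langle-,-\rangle_2:(\lozenge^{n-1}V)\times V\to K$ be the induced bilinear form, $\langle\overline{v_1\otimes\cdots\otimes v_{n-1}},v\rangle_2=\langle v_1,\ldots,v_{n-1},v\rangle_n$ extended linearly. The form is non-degenerate if for every nonzero $t\in\lozenge^{n-1}V$ there is $w\in V$ with $\langle t,w\rangle_2\ne0$; it is generic if for every $m\in\mathbb{N}$, all linearly independent $t_1,\ldots,t_m\in\lozenge^{n-1}V$ and all $k_1,\ldots,k_m\in K$ there is $w\in V$ with $\langle t_i,w\rangle_2=k_i$ for all $i\le m$. *)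

theory Defs
  imports Complex_Main "HOL-Library.Multiset" "HOL-Library.Function_Algebras"
begin

text \<open>An n-linear form on the vector space V (= the whole type 'v, scalar
multiplication scale over the field 'k) is a function on lists of length n.\<close>

definition multilinear_form ::
  "('k::field \<Rightarrow> 'v::ab_group_add \<Rightarrow> 'v) \<Rightarrow> nat \<Rightarrow> ('v list \<Rightarrow> 'k) \<Rightarrow> bool" where
  "multilinear_form scale n f \<longleftrightarrow>
     (\<forall>xs i. length xs = n \<longrightarrow> i < n \<longrightarrow>
        Vector_Spaces.linear scale ((*) :: 'k \<Rightarrow> 'k \<Rightarrow> 'k) (\<lambda>v. f (xs[i := v])))"

definition alternating_form :: "nat \<Rightarrow> ('v list \<Rightarrow> 'k::field) \<Rightarrow> bool" where
  "alternating_form n f \<longleftrightarrow>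
     (\<forall>xs i j. length xs = n \<longrightarrow> i < j \<longrightarrow> j < n \<longrightarrow> xs ! i = xs ! j \<longrightarrow> f xs = 0)"

definition symmetric_form :: "nat \<Rightarrow> ('v list \<Rightarrow> 'k::field) \<Rightarrow> bool" where
  "symmetric_form n f \<longleftrightarrow>
     (\<forall>xs ys. length xs = n \<longrightarrow> mset xs = mset ys \<longrightarrow> f xs = f ys)"

definition nlinear_space ::
  "('k::field \<Rightarrow> 'v::ab_group_add \<Rightarrow> 'v) \<Rightarrow> nat \<Rightarrow> bool \<Rightarrow> ('v list \<Rightarrow> 'k) \<Rightarrow> bool" where
  "nlinear_space scale n alt f \<longleftrightarrow> vector_space scale \<and> multilinear_form scale n f \<and>
     (if alt then alternating_form n f else symmetric_form n f)"

definition infinite_dimensional :: "('k::field \<Rightarrow> 'v::ab_group_add \<Rightarrow> 'v) \<Rightarrow> bool" where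
  "infinite_dimensional scale \<longleftrightarrow> \<not> (\<exists>B. finite B \<and> module.span scale B = UNIV)"

text \<open>Free vector space on (m)-tuples of vectors: finitely supported functions
'v list \<Rightarrow> 'k supported on lists of length m.  The tensor power
V^{\<otimes>m} is its quotient by the multilinearity relations, and
\<lozenge>^m V (exterior / symmetric power) is its quotient by the span of the
multilinearity relations together with the alternating (resp. symmetric) relations.\<close>

definition delta :: "'a \<Rightarrow> 'a \<Rightarrow> 'k::field" where
  "delta a = (\<lambda>b. if b = a then 1 else 0)"

definition free_comb :: "nat \<Rightarrow> ('v list \<Rightarrow> 'k::field) set" where
  "free_comb m = {c. finite {xs. c xs \<noteq> 0} \<and> (\<forall>xs. c xs \<noteq> 0 \<longrightarrow> length xs = m)}"

definition fscale :: "'k::field \<Rightarrow> ('a \<Rightarrow> 'k) \<Rightarrow> ('a \<Rightarrow> 'k)" where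
  "fscale a c = (\<lambda>x. a * c x)"

definition rel_gens ::
  "('k::field \<Rightarrow> 'v::ab_group_add \<Rightarrow> 'v) \<Rightarrow> nat \<Rightarrow> bool \<Rightarrow> ('v list \<Rightarrow> 'k) set" where
  "rel_gens scale m alt =
     {delta (xs[i := scale a u + scale b v]) - fscale a (delta (xs[i := u])) - fscale b (delta (xs[i := v]))
        | xs i a b u v. length xs = m \<and> i < m}
   \<union> (if alt then {delta xs | xs i j. length xs = m \<and> i < j \<and> j < m \<and> xs ! i = xs ! j}
      else {delta xs - delta ys | xs ys. length xs = m \<and> mset xs = mset ys})"

text \<open>Representatives of zero in \<lozenge>^m V.\<close>
definition rel_space ::
  "('k::field \<Rightarrow> 'v::ab_group_add \<Rightarrow> 'v) \<Rightarrow> nat \<Rightarrow> bool \<Rightarrow> ('v list \<Rightarrow> 'k) set" where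
  "rel_space scale m alt = module.span fscale (rel_gens scale m alt)"

text \<open>The induced pairing \<langle>t, w\<rangle>_2 on representatives t of \<lozenge>^{n-1} V.\<close>
definition pairing2 :: "('v list \<Rightarrow> 'k::field) \<Rightarrow> ('v list \<Rightarrow> 'k) \<Rightarrow> 'v \<Rightarrow> 'k" where
  "pairing2 f c w = (\<Sum>xs\<in>{xs. c xs \<noteq> 0}. c xs * f (xs @ [w]))"

definition nondegenerate ::
  "('k::field \<Rightarrow> 'v::ab_group_add \<Rightarrow> 'v) \<Rightarrow> nat \<Rightarrow> bool \<Rightarrow> ('v list \<Rightarrow> 'k) \<Rightarrow> bool" where
  "nondegenerate scale n alt f \<longleftrightarrow>
     (\<forall>c \<in> free_comb (n - 1). c \<notin> rel_space scale (n - 1) alt \<longrightarrow> (\<exists>w. pairing2 f c w \<noteq> 0))"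

text \<open>t_0,...,t_{m-1} (given by representatives) are linearly independent in \<lozenge>^{n-1} V.\<close>
definition lin_indep_mod ::
  "('k::field \<Rightarrow> 'v::ab_group_add \<Rightarrow> 'v) \<Rightarrow> nat \<Rightarrow> bool \<Rightarrow> nat \<Rightarrow> (nat \<Rightarrow> 'v list \<Rightarrow> 'k) \<Rightarrow> bool" where
  "lin_indep_mod scale m alt k t \<longleftrightarrow>
     (\<forall>a. (\<Sum>i<k. fscale (a i) (t i)) \<in> rel_space scale m alt \<longrightarrow> (\<forall>i<k. a i = 0))"

definition generic ::
  "('k::field \<Rightarrow> 'v::ab_group_add \<Rightarrow> 'v) \<Rightarrow> nat \<Rightarrow> bool \<Rightarrow> ('v list \<Rightarrow> 'k) \<Rightarrow> bool" where
  "generic scale n alt f \<longleftrightarrow>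
     (\<forall>m t kk. (\<forall>i<m. t i \<in> free_comb (n - 1)) \<longrightarrow> lin_indep_mod scale (n - 1) alt m t \<longrightarrow>
        (\<exists>w. \<forall>i<m. pairing2 f (t i) w = kk i))"

end

theory Submission
  imports Defs
begin

(* Nondegeneracy says exactly that t \<mapsto> \<langle>t, -\<rangle>_2 is injective on the (n-1)-st power,
   so independent t_1, ..., t_m give linearly independent functionals \<langle>t_i, -\<rangle>_2 on V, and
   finitely many independent linear functionals are jointly surjective onto K^m (induction
   on m, building dual vectors). Conversely, genericity for the single element t gives
   \<langle>t, w\<rangle>_2 = 1. Neither direction needs infinite dimensionality of V, n \<ge> 2 beyond n \<ge> 1,
   or the alternating/symmetric condition on the form. *)

lemma module_fscale: "module (fscale :: 'k::field \<Rightarrow> ('a \<Rightarrow> 'k) \<Rightarrow> ('a \<Rightarrow> 'k))"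
  unfolding module_def fscale_def by (auto simp: fun_eq_iff algebra_simps)

lemma sum_fscale_apply: "(\<Sum>i\<in>I. fscale (a i) (t i)) x = (\<Sum>i\<in>I. a i * t i x)"
  by (induction I rule: infinite_finite_induct) (auto simp: fscale_def)

lemma sum_fscale_in_free_comb:
  assumes "finite I" "\<And>i. i \<in> I \<Longrightarrow> t i \<in> free_comb m"
  shows "(\<Sum>i\<in>I. fscale (a i) (t i)) \<in> free_comb m"
proof -
  have supp: "{xs. (\<Sum>i\<in>I. fscale (a i) (t i)) xs \<noteq> 0} \<subseteq> (\<Union>i\<in>I. {xs. t i xs \<noteq> 0})"
    by (auto simp: sum_fscale_apply intro: ccontr sum.neutral)
  have "finite (\<Union>i\<in>I. {xs. t i xs \<noteq> 0})"
    using assms by (auto simp: free_comb_def)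
  with supp assms show ?thesis
    unfolding free_comb_def by (auto intro: finite_subset)
qed

lemma pairing2_eq_sum_superset:
  assumes "finite S" "{xs. c xs \<noteq> 0} \<subseteq> S"
  shows "pairing2 f c w = (\<Sum>xs\<in>S. c xs * f (xs @ [w]))"
  unfolding pairing2_def using assms by (intro sum.mono_neutral_left) auto

lemma pairing2_sum_fscale:
  assumes "finite I" "\<And>i. i \<in> I \<Longrightarrow> finite {xs. t i xs \<noteq> 0}"
  shows "pairing2 f (\<Sum>i\<in>I. fscale (a i) (t i)) w = (\<Sum>i\<in>I. a i * pairing2 f (t i) w)"
proof -
  define S where "S = (\<Union>i\<in>I. {xs. t i xs \<noteq> 0})"
  have S: "finite S" "\<And>i. i \<in> I \<Longrightarrow> {xs. t i xs \<noteq> 0} \<subseteq> S"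
    using assms by (auto simp: S_def)
  have "{xs. (\<Sum>i\<in>I. fscale (a i) (t i)) xs \<noteq> 0} \<subseteq> S"
    by (auto simp: S_def sum_fscale_apply intro: ccontr sum.neutral)
  then have "pairing2 f (\<Sum>i\<in>I. fscale (a i) (t i)) w
      = (\<Sum>xs\<in>S. (\<Sum>i\<in>I. a i * t i xs) * f (xs @ [w]))"
    using S by (simp add: pairing2_eq_sum_superset sum_fscale_apply)
  also have "\<dots> = (\<Sum>i\<in>I. a i * (\<Sum>xs\<in>S. t i xs * f (xs @ [w])))"
    by (simp add: sum_distrib_left sum_distrib_right mult.assoc sum.swap[of _ S])
  also have "\<dots> = (\<Sum>i\<in>I. a i * pairing2 f (t i) w)"
    using S by (simp add: pairing2_eq_sum_superset)
  finally show ?thesis .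
qed

lemma linear_append_last:
  fixes scale :: "'k::field \<Rightarrow> 'v::ab_group_add \<Rightarrow> 'v"
  assumes "multilinear_form scale n f" "0 < n" "length xs = n - 1"
  shows "Vector_Spaces.linear scale (*) (\<lambda>v. f (xs @ [v]))"
proof -
  have "Vector_Spaces.linear scale (*) (\<lambda>v. f ((xs @ [0])[n - 1 := v]))"
    using assms unfolding multilinear_form_def by simp
  moreover have "(xs @ [0])[n - 1 := v] = xs @ [v]" for v
    using assms(3) by (metis list_update_length)
  ultimately show ?thesis by simp
qed

lemma linear_pairing2:
  fixes scale :: "'k::field \<Rightarrow> 'v::ab_group_add \<Rightarrow> 'v"
  assumes f: "multilinear_form scale n f" and "0 < n" and c: "c \<in> free_comb (n - 1)"
  shows "Vector_Spaces.linear scale (*) (pairing2 f c)"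
proof -
  have vs: "vector_space_pair scale ((*) :: 'k \<Rightarrow> 'k \<Rightarrow> 'k)"
    using linear_append_last[OF f \<open>0 < n\<close>, of "replicate (n - 1) 0"]
    by (simp add: Vector_Spaces.linear_iff vector_space_pair_def)
  moreover have "\<forall>xs \<in> {xs. c xs \<noteq> 0}. Vector_Spaces.linear scale (*) (\<lambda>w. c xs * f (xs @ [w]))"
    using c linear_append_last[OF f \<open>0 < n\<close>]
    by (auto simp: free_comb_def intro: vector_space_pair.linear_compose_scale_right[OF vs])
  ultimately show ?thesis
    unfolding pairing2_def[abs_def] by (rule vector_space_pair.linear_compose_sum)
qed

lemma independent_functionals_dual_vector:
  fixes \<phi> :: "nat \<Rightarrow> 'v::ab_group_add \<Rightarrow> 'k::field"
  assumes lin: "\<And>i. i < Suc m \<Longrightarrow> Vector_Spaces.linear scale (*) (\<phi> i)"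
    and indep: "\<And>a. (\<And>w. (\<Sum>i<Suc m. a i * \<phi> i w) = 0) \<Longrightarrow> \<forall>i<Suc m. a i = 0"
    and dual: "\<And>i j. i < m \<Longrightarrow> j < m \<Longrightarrow> \<phi> i (W j) = (if i = j then 1 else 0)"
  shows "\<exists>u. \<phi> m u = 1 \<and> (\<forall>i<m. \<phi> i u = 0)"
proof -
  have hom: "module_hom scale (*) (\<phi> i)" if "i < Suc m" for i
    using lin[OF that] by (rule module_hom_linearI)
  define a where "a i = (if i = m then 1 else - \<phi> m (W i))" for i
  have "a m \<noteq> 0"
    by (simp add: a_def)
  then obtain w where "(\<Sum>i<Suc m. a i * \<phi> i w) \<noteq> 0"
    using indep lessI by blast
  \<comment> \<open>\<open>\<psi>\<close> is the value at \<open>w\<close> of \<open>\<phi> m - (\<Sum>j<m. \<phi> m (W j) \<cdot> \<phi> j)\<close>, which vanishes on all \<open>W j\<close>\<close>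
  moreover define \<psi> where "\<psi> = \<phi> m w - (\<Sum>j<m. \<phi> j w * \<phi> m (W j))"
  ultimately have "\<psi> \<noteq> 0"
    by (simp add: a_def \<psi>_def sum_negf mult.commute)
  define v where "v = w - (\<Sum>j<m. scale (\<phi> j w) (W j))"
  have v_i: "\<phi> i v = 0" if "i < m" for i
  proof -
    have "\<phi> i v = \<phi> i w - (\<Sum>j<m. \<phi> j w * (if i = j then 1 else 0))"
      using that by (simp add: v_def module_hom.diff[OF hom] module_hom.sum[OF hom]
          module_hom.scale[OF hom] dual)
    then show ?thesis
      using that by (simp add: if_distrib[of "\<lambda>x. _ * x"] cong: if_cong)
  qed
  have v_m: "\<phi> m v = \<psi>"
    by (simp add: v_def \<psi>_def module_hom.diff[OF hom] module_hom.sum[OF hom] module_hom.scale[OF hom])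
  show ?thesis
    using \<open>\<psi> \<noteq> 0\<close> v_i v_m
    by (intro exI[of _ "scale (1 / \<psi>) v"]) (simp add: module_hom.scale[OF hom])
qed

lemma independent_functionals_jointly_surj:
  fixes \<phi> :: "nat \<Rightarrow> 'v::ab_group_add \<Rightarrow> 'k::field"
  assumes "\<And>i. i < m \<Longrightarrow> Vector_Spaces.linear scale (*) (\<phi> i)"
    and "\<And>a. (\<And>w. (\<Sum>i<m. a i * \<phi> i w) = 0) \<Longrightarrow> \<forall>i<m. a i = 0"
  shows "\<exists>w. \<forall>i<m. \<phi> i w = b i"
  using assms
proof (induction m arbitrary: b)
  case 0
  show ?case by simp
next
  case (Suc m)
  have hom: "module_hom scale (*) (\<phi> i)" if "i < Suc m" for i
    using Suc.prems(1)[OF that] by (rule module_hom_linearI)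
  have indep_m: "\<forall>i<m. a i = 0" if "\<And>w. (\<Sum>i<m. a i * \<phi> i w) = 0" for a
  proof -
    have "\<forall>i<Suc m. (a(m := 0)) i = 0"
      using Suc.prems(2)[of "a(m := 0)"] that by simp
    then show ?thesis
      by (metis fun_upd_other less_SucI less_irrefl_nat)
  qed
  have onto_m: "\<exists>w. \<forall>i<m. \<phi> i w = b i" for b
    using Suc.IH Suc.prems(1) indep_m by simp
  then have "\<forall>j. \<exists>w. \<forall>i<m. \<phi> i w = (if i = j then 1 else 0)"
    by (intro allI)
  then have "\<exists>W. \<forall>j. \<forall>i<m. \<phi> i (W j) = (if i = j then 1 else 0)"
    by (rule choice)
  then obtain W where W: "\<And>i j. i < m \<Longrightarrow> j < m \<Longrightarrow> \<phi> i (W j) = (if i = j then 1 else 0)"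
    by blast
  have "\<exists>u. \<phi> m u = 1 \<and> (\<forall>i<m. \<phi> i u = 0)"
    using Suc.prems W by (rule independent_functionals_dual_vector)
  then obtain u where u: "\<phi> m u = 1" "\<forall>i<m. \<phi> i u = 0"
    by blast
  obtain w0 where w0: "\<forall>i<m. \<phi> i w0 = b i"
    using onto_m by blast
  have "\<phi> i (w0 + scale (b m - \<phi> m w0) u) = \<phi> i w0 + (b m - \<phi> m w0) * \<phi> i u"
    if "i < Suc m" for i
    using that by (simp add: module_hom.add[OF hom] module_hom.scale[OF hom])
  then have "\<forall>i<Suc m. \<phi> i (w0 + scale (b m - \<phi> m w0) u) = b i"
    using w0 u by (simp add: less_Suc_eq)
  then show ?case by blast
qed

lemma lin_indep_mod_single:
  fixes scale :: "'k::field \<Rightarrow> 'v::ab_group_add \<Rightarrow> 'v"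
  assumes "c \<notin> rel_space scale m alt"
  shows "lin_indep_mod scale m alt 1 (\<lambda>_. c)"
  unfolding lin_indep_mod_def
proof (intro allI impI)
  fix a :: "nat \<Rightarrow> 'k" and i :: nat
  assume "(\<Sum>i<1. fscale (a i) c) \<in> rel_space scale m alt" and "i < 1"
  then have "fscale (a 0) c \<in> rel_space scale m alt" and "i = 0"
    by simp_all
  then have "a 0 \<noteq> 0 \<Longrightarrow> c \<in> rel_space scale m alt"
    using module.span_scale[OF module_fscale, of _ _ "1 / a 0"]
    by (fastforce simp: rel_space_def fscale_def)
  with assms \<open>i = 0\<close> show "a i = 0"
    by blast
qed

lemma nondegenerate_imp_independent_pairings:
  assumes nd: "nondegenerate scale n alt f"
    and t: "\<And>i. i < k \<Longrightarrow> t i \<in> free_comb (n - 1)"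
    and indep: "lin_indep_mod scale (n - 1) alt k t"
    and vanish: "\<And>w. (\<Sum>i<k. a i * pairing2 f (t i) w) = 0"
  shows "\<forall>i<k. a i = 0"
proof -
  let ?c = "\<Sum>i<k. fscale (a i) (t i)"
  have "?c \<in> free_comb (n - 1)"
    using t by (intro sum_fscale_in_free_comb) auto
  moreover have "pairing2 f ?c w = 0" for w
    using t vanish by (subst pairing2_sum_fscale) (auto simp: free_comb_def)
  ultimately have "?c \<in> rel_space scale (n - 1) alt"
    using nd unfolding nondegenerate_def by blast
  then show ?thesis
    using indep unfolding lin_indep_mod_def by blast
qed

theorem lemma2p5:
  fixes scale :: "'k::field \<Rightarrow> 'v::ab_group_add \<Rightarrow> 'v"
    and f :: "'v list \<Rightarrow> 'k" and n :: nat and alt :: bool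
  assumes "n \<ge> 2"
    and "nlinear_space scale n alt f"
    and "infinite_dimensional scale"
  shows "nondegenerate scale n alt f \<longleftrightarrow> generic scale n alt f"
proof
  have "0 < n" and f: "multilinear_form scale n f"
    using assms(1,2) by (simp_all add: nlinear_space_def)
  show "generic scale n alt f" if nd: "nondegenerate scale n alt f"
    unfolding generic_def
  proof (intro allI impI)
    fix m t kk
    assume t: "\<forall>i<m. t i \<in> free_comb (n - 1)" and indep: "lin_indep_mod scale (n - 1) alt m t"
    show "\<exists>w. \<forall>i<m. pairing2 f (t i) w = kk i"
    proof (rule independent_functionals_jointly_surj)
      show "Vector_Spaces.linear scale (*) (pairing2 f (t i))" if "i < m" for i
        using t that by (intro linear_pairing2[OF f \<open>0 < n\<close>]) auto
      show "\<forall>i<m. a i = 0" if "\<And>w. (\<Sum>i<m. a i * pairing2 f (t i) w) = 0" for a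
        using t that by (intro nondegenerate_imp_independent_pairings[OF nd _ indep]) auto
    qed
  qed
  show "nondegenerate scale n alt f" if g: "generic scale n alt f"
    unfolding nondegenerate_def
  proof (intro ballI impI)
    fix c
    assume "c \<in> free_comb (n - 1)" and "c \<notin> rel_space scale (n - 1) alt"
    then have "\<exists>w. pairing2 f c w = 1"
      using g[unfolded generic_def, rule_format, of 1 "\<lambda>_. c" "\<lambda>_. 1"]
        lin_indep_mod_single[of c scale "n - 1" alt]
      by simp
    then show "\<exists>w. pairing2 f c w \<noteq> 0"
      by (metis one_neq_zero)
  qed
qed

end
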